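(* Let $M$ be a closed Riemannian manifold and $\gamma$ a closed piecewise differentiable curve on $M$ of length $L$. Suppose there is a homotopy $H(t,\tau)=\gamma_\tau(t)$ of width $W$ contracting $\gamma=\gamma_0$ to a point through closed curves of length at most $L$. Then there is a homotopy contracting $\gamma$ to the constant loop at $\gamma(0)$ through loops based at $\gamma(0)$, each of length at most $L+2W$.
   Context: For a homotopy of closed curves $H(t,\tau)$ ($t$ the curve parameter, $\tau\in[0,1]$ the homotopy parameter), its width is $\sup_t \ell(\tau\mapsto H(t,\tau))$, the maximal length of the trajectory of a point of the curve during the homotopy. *)

theory Defs
  imports "HOL-Analysis.Analysis"
begin

definition partitions :: "real \<Rightarrow> real \<Rightarrow> (nat \<times> (nat \<Rightarrow> real)) set" where
  "partitions a b = {(n, p). p 0 = a \<and> p n = b \<and> (\<forall>i<n. p i \<le> p (Suc i))}"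

text \<open>Length of a curve g restricted to [a,b] (supremum of inscribed polygon lengths),
  valued in the extended reals so that non-rectifiable curves have length \<infinity>.\<close>
definition curve_length :: "real \<Rightarrow> real \<Rightarrow> (real \<Rightarrow> 'a::metric_space) \<Rightarrow> ereal" where
  "curve_length a b g =
     (SUP np \<in> partitions a b. ereal (\<Sum>i<fst np. dist (g (snd np i)) (g (snd np (Suc i)))))"

definition homotopy_width :: "(real \<times> real \<Rightarrow> 'a::metric_space) \<Rightarrow> ereal" where
  "homotopy_width H = (SUP t \<in> {0..1}. curve_length 0 1 (\<lambda>\<tau>. H (t, \<tau>)))"

end

theory Submission
  imports Defs
begin

text \<open>Drag the base point along its own trajectory \<beta> = H(0,-). At stage a the loop runs up \<beta> from
  \<gamma>(0) to \<beta>(a), once around the curve H(-,a), and back down \<beta> (which is also the trajectory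
  H(1,-) of the other end), so it is based at \<gamma>(0) and has length at most W + L + W. At a = 1 the
  middle part is constant, and the remaining loop, which goes up \<beta> and straight back, is
  contracted by retracting it along \<beta>.\<close>

lemma partitions_mono:
  assumes "(n, p) \<in> partitions a b" "i \<le> j" "j \<le> n"
  shows "p i \<le> p j"
  using assms(2,3)
proof (induction j)
  case (Suc j)
  show ?case
  proof (cases "i = Suc j")
    case False
    with Suc have "p i \<le> p j" by simp
    also have "p j \<le> p (Suc j)" using assms(1) Suc.prems by (auto simp: partitions_def)
    finally show ?thesis .
  qed simp
qed simp

lemma partitions_range:
  assumes "(n, p) \<in> partitions a b" "i \<le> n"
  shows "p i \<in> {a..b}"
  using partitions_mono[OF assms(1), of 0 i] partitions_mono[OF assms(1), of i n] assms
  by (auto simp: partitions_def)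

lemma curve_length_leI:
  assumes "\<And>n p. (n, p) \<in> partitions a b \<Longrightarrow> (\<Sum>i<n. dist (g (p i)) (g (p (Suc i)))) \<le> B"
  shows "curve_length a b g \<le> ereal B"
  unfolding curve_length_def by (rule SUP_least) (use assms in auto)

lemma sum_dist_le_curve_length:
  assumes "(n, p) \<in> partitions a b"
  shows "ereal (\<Sum>i<n. dist (g (p i)) (g (p (Suc i)))) \<le> curve_length a b g"
  unfolding curve_length_def using assms by (force intro: SUP_upper2)

lemma curve_length_cong:
  assumes "\<And>x. x \<in> {a..b} \<Longrightarrow> f x = g x"
  shows "curve_length a b f = curve_length a b g"
  unfolding curve_length_def
proof (rule SUP_cong[OF refl], clarify)
  fix n p assume np: "(n, p) \<in> partitions a b"
  then have "\<And>i. i \<le> n \<Longrightarrow> f (p i) = g (p i)" using partitions_range assms by blast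
  then show "(\<Sum>i<fst (n, p). dist (f (snd (n, p) i)) (f (snd (n, p) (Suc i)))) =
             (\<Sum>i<fst (n, p). dist (g (snd (n, p) i)) (g (snd (n, p) (Suc i))))"
    by (auto intro!: sum.cong)
qed

lemma curve_length_nonneg:
  assumes "a \<le> b"
  shows "0 \<le> curve_length a b g"
proof -
  have "(1, \<lambda>i. if i = 0 then a else b) \<in> partitions a b"
    using assms by (auto simp: partitions_def)
  from sum_dist_le_curve_length[OF this, of g] show ?thesis
    by (rule order_trans[rotated]) simp
qed

lemma curve_length_const:
  assumes "\<And>x. x \<in> {a..b} \<Longrightarrow> g x = c"
  shows "curve_length a b g \<le> 0"
proof -
  have "curve_length a b g = curve_length a b (\<lambda>_. c)" by (rule curve_length_cong) (use assms in auto)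
  also have "\<dots> \<le> ereal 0" by (rule curve_length_leI) simp
  finally show ?thesis by (simp add: zero_ereal_def)
qed

text \<open>Extending a partition of [a,b] by the point c gives a partition of [a,c].\<close>
lemma curve_length_mono_right:
  assumes "a \<le> b" "b \<le> c"
  shows "curve_length a b g \<le> curve_length a c g"
  unfolding curve_length_def[of a b]
proof (rule SUP_least, clarify)
  fix n p assume np: "(n, p) \<in> partitions a b"
  define q where "q i = (if i \<le> n then p i else c)" for i
  have "(Suc n, q) \<in> partitions a c"
    using np assms by (auto simp: partitions_def q_def less_Suc_eq)
  from sum_dist_le_curve_length[OF this, of g]
  show "ereal (\<Sum>i<fst (n, p). dist (g (snd (n, p) i)) (g (snd (n, p) (Suc i)))) \<le> curve_length a c g"
    by (rule order_trans[rotated]) (simp add: q_def)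
qed

text \<open>Clamping a partition of [a,c] to [a,b] and to [b,c] gives partitions of both halves;
  the inscribed step straddling b is controlled by the triangle inequality through g b.\<close>
lemma curve_length_split_le:
  assumes "a \<le> b" "b \<le> c"
  shows "curve_length a c g \<le> curve_length a b g + curve_length b c g"
  unfolding curve_length_def[of a c]
proof (rule SUP_least, clarify)
  fix n p assume np: "(n, p) \<in> partitions a c"
  define q where "q i = min b (p i)" for i
  define r where "r i = max b (p i)" for i
  have q: "(n, q) \<in> partitions a b" and r: "(n, r) \<in> partitions b c"
    using np assms by (auto simp: partitions_def q_def r_def)
  have "dist (g (p i)) (g (p (Suc i))) \<le>
      dist (g (q i)) (g (q (Suc i))) + dist (g (r i)) (g (r (Suc i)))" if "i < n" for i
  proof -
    have "p i \<le> p (Suc i)" using np that by (auto simp: partitions_def)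
    then show ?thesis
      using dist_triangle[of "g (p i)" "g (p (Suc i))" "g b"]
      by (cases "p (Suc i) \<le> b"; cases "b \<le> p i") (auto simp: q_def r_def max_def min_def)
  qed
  then have "(\<Sum>i<n. dist (g (p i)) (g (p (Suc i)))) \<le>
      (\<Sum>i<n. dist (g (q i)) (g (q (Suc i)))) + (\<Sum>i<n. dist (g (r i)) (g (r (Suc i))))"
    unfolding sum.distrib[symmetric] by (intro sum_mono) auto
  then have "ereal (\<Sum>i<n. dist (g (p i)) (g (p (Suc i)))) \<le>
      ereal (\<Sum>i<n. dist (g (q i)) (g (q (Suc i)))) + ereal (\<Sum>i<n. dist (g (r i)) (g (r (Suc i))))"
    by simp
  also have "\<dots> \<le> curve_length a b g + curve_length b c g"
    by (intro add_mono sum_dist_le_curve_length q r)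
  finally show "ereal (\<Sum>i<fst (n, p). dist (g (snd (n, p) i)) (g (snd (n, p) (Suc i)))) \<le>
      curve_length a b g + curve_length b c g"
    by simp
qed

lemma curve_length_reparam_mono_le:
  assumes "\<And>x. x \<in> {a..b} \<Longrightarrow> f x = g (\<phi> x)" "mono_on {a..b} \<phi>" "\<phi> a = c" "\<phi> b = d"
  shows "curve_length a b f \<le> curve_length c d g"
proof -
  have "curve_length a b f = curve_length a b (g \<circ> \<phi>)"
    by (rule curve_length_cong) (use assms(1) in simp)
  also have "\<dots> \<le> curve_length c d g"
    unfolding curve_length_def[of a b]
  proof (rule SUP_least, clarify)
    fix n p assume np: "(n, p) \<in> partitions a b"
    have "(n, \<phi> \<circ> p) \<in> partitions c d"
      using np assms(2-4) partitions_range[OF np]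
      by (auto simp: partitions_def intro: mono_onD)
    from sum_dist_le_curve_length[OF this, of g]
    show "ereal (\<Sum>i<fst (n, p). dist ((g \<circ> \<phi>) (snd (n, p) i)) ((g \<circ> \<phi>) (snd (n, p) (Suc i))))
        \<le> curve_length c d g"
      by simp
  qed
  finally show ?thesis .
qed

text \<open>An antitone reparametrisation runs through the partition backwards.\<close>
lemma curve_length_reparam_antimono_le:
  assumes "\<And>x. x \<in> {a..b} \<Longrightarrow> f x = g (\<phi> x)" "antimono_on {a..b} \<phi>" "\<phi> a = d" "\<phi> b = c"
  shows "curve_length a b f \<le> curve_length c d g"
proof -
  have "curve_length a b f = curve_length a b (g \<circ> \<phi>)"
    by (rule curve_length_cong) (use assms(1) in simp)
  also have "\<dots> \<le> curve_length c d g"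
    unfolding curve_length_def[of a b]
  proof (rule SUP_least, clarify)
    fix n p assume np: "(n, p) \<in> partitions a b"
    have "\<phi> (p (n - i)) \<le> \<phi> (p (n - Suc i))" if "i < n" for i
    proof -
      have "n - i = Suc (n - Suc i)" using that by simp
      then show ?thesis
        using np that partitions_range[OF np, of "n - i"] partitions_range[OF np, of "n - Suc i"]
        by (auto simp: partitions_def intro!: monotone_onD[OF assms(2)])
    qed
    then have "(n, \<lambda>i. \<phi> (p (n - i))) \<in> partitions c d"
      using np assms(3,4) by (auto simp: partitions_def)
    from sum_dist_le_curve_length[OF this, of g]
    have "ereal (\<Sum>i<n. dist (g (\<phi> (p (n - i)))) (g (\<phi> (p (n - Suc i))))) \<le> curve_length c d g"
      by simp
    also have "(\<Sum>i<n. dist (g (\<phi> (p (n - i)))) (g (\<phi> (p (n - Suc i))))) =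
        (\<Sum>i<n. dist (g (\<phi> (p i))) (g (\<phi> (p (Suc i)))))"
      using sum.nat_diff_reindex[of "\<lambda>j. dist (g (\<phi> (p j))) (g (\<phi> (p (Suc j))))" n]
      by (simp add: Suc_diff_Suc dist_commute)
    finally show "ereal (\<Sum>i<fst (n, p). dist ((g \<circ> \<phi>) (snd (n, p) i)) ((g \<circ> \<phi>) (snd (n, p) (Suc i))))
        \<le> curve_length c d g"
      by simp
  qed
  finally show ?thesis .
qed

text \<open>The loop t \<mapsto> lasso a t in the parameter square climbs the edge {0} \<times> [0,a] during
  [0, a/3], crosses [0,1] \<times> {a} during [a/3, 1 - a/3] and descends {1} \<times> [0,a] during
  [1 - a/3, 1].\<close>
definition lasso :: "real \<Rightarrow> real \<Rightarrow> real \<times> real" where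
  "lasso a t = (max 0 (min 1 ((t - a/3) / (1 - 2*a/3))), min a (min (3*t) (3*(1 - t))))"

text \<open>The tether retracted to height b: climb {0} \<times> [0,b], wait, descend again.\<close>
definition tether :: "real \<Rightarrow> real \<Rightarrow> real" where
  "tether b t = b * min 1 (min (3*t) (3*(1 - t)))"

lemma lasso_climb:
  assumes "0 \<le> a" "a \<le> 1" "0 \<le> t" "t \<le> a/3"
  shows "lasso a t = (0, 3*t)"
proof -
  have "(t - a/3) / (1 - 2*a/3) \<le> 0" using assms by (intro divide_nonpos_pos) auto
  then show ?thesis using assms by (simp add: lasso_def)
qed

lemma lasso_cross:
  assumes "0 \<le> a" "a \<le> 1" "a/3 \<le> t" "t \<le> 1 - a/3"
  shows "lasso a t = ((t - a/3) / (1 - 2*a/3), a)"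
proof -
  have "(t - a/3) / (1 - 2*a/3) \<le> 1" using assms by (subst divide_le_eq) auto
  moreover have "0 \<le> (t - a/3) / (1 - 2*a/3)" using assms by (intro divide_nonneg_pos) auto
  ultimately show ?thesis using assms by (simp add: lasso_def)
qed

lemma lasso_descend:
  assumes "0 \<le> a" "a \<le> 1" "1 - a/3 \<le> t" "t \<le> 1"
  shows "lasso a t = (1, 3*(1 - t))"
proof -
  have "1 \<le> (t - a/3) / (1 - 2*a/3)" using assms by (subst le_divide_eq) auto
  then show ?thesis using assms by (simp add: lasso_def)
qed

lemma lasso_zero: "t \<in> {0..1} \<Longrightarrow> lasso 0 t = (t, 0)"
  by (simp add: lasso_def)

lemma lasso_in_square:
  assumes "a \<in> {0..1}" "t \<in> {0..1}"
  shows "lasso a t \<in> {0..1} \<times> {0..1}"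
  using assms by (auto simp: lasso_def)

lemma tether_climb: "t \<le> 1/3 \<Longrightarrow> tether b t = b * (3*t)"
  by (simp add: tether_def)

lemma tether_wait: "1/3 \<le> t \<Longrightarrow> t \<le> 2/3 \<Longrightarrow> tether b t = b"
  by (simp add: tether_def)

lemma tether_descend: "2/3 \<le> t \<Longrightarrow> tether b t = b * (3*(1 - t))"
  by (simp add: tether_def)

lemma tether_in_unit: "b \<in> {0..1} \<Longrightarrow> t \<in> {0..1} \<Longrightarrow> tether b t \<in> {0..1}"
  by (auto simp: tether_def mult_le_one)

lemma continuous_on_lasso [continuous_intros]:
  assumes "continuous_on S f" "continuous_on S g" "\<And>z. z \<in> S \<Longrightarrow> f z \<le> 1"
  shows "continuous_on S (\<lambda>z. lasso (f z) (g z))"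
  unfolding lasso_def using assms by (intro continuous_intros) force+

lemma continuous_on_tether [continuous_intros]:
  "continuous_on S f \<Longrightarrow> continuous_on S g \<Longrightarrow> continuous_on S (\<lambda>z. tether (f z) (g z))"
  unfolding tether_def by (intro continuous_intros)

text \<open>Once the lasso has been pulled up to a constant curve, the only thing left is the tether.\<close>
lemma lasso_one_eq_tether_one:
  assumes top: "\<And>x. x \<in> {0..1} \<Longrightarrow> H (x, 1) = c"
    and closed: "\<And>y. y \<in> {0..1} \<Longrightarrow> H (1, y) = H (0, y)"
    and t: "t \<in> {0..1}"
  shows "H (lasso 1 t) = H (0, tether 1 t)"
proof -
  consider "t \<le> 1/3" | "1/3 \<le> t" "t \<le> 2/3" | "2/3 \<le> t" by linarith
  then show ?thesis
  proof cases
    case 1 then show ?thesis using t by (simp add: lasso_climb tether_climb)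
  next
    case 2
    then have "lasso 1 t = (3*t - 1, 1)" "tether 1 t = 1"
      by (simp_all add: lasso_cross tether_wait field_simps)
    moreover have "3*t - 1 \<in> {0..1}" using 2 by simp
    ultimately show ?thesis using top by simp
  next
    case 3 then show ?thesis using t closed by (simp add: lasso_descend tether_descend)
  qed
qed

lemma curve_length_split3_le:
  assumes "a \<le> u" "u \<le> v" "v \<le> b"
  shows "curve_length a b g \<le> curve_length a u g + curve_length u v g + curve_length v b g"
proof -
  have "curve_length a b g \<le> curve_length a u g + curve_length u b g"
    using assms by (intro curve_length_split_le) auto
  also have "\<dots> \<le> curve_length a u g + (curve_length u v g + curve_length v b g)"
    using assms by (intro add_left_mono curve_length_split_le)
  finally show ?thesis by (simp add: add.assoc)
qed

lemma curve_length_lasso: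
  fixes H :: "real \<times> real \<Rightarrow> 'a::metric_space"
  assumes a: "0 \<le> a" "a \<le> 1"
    and across: "curve_length 0 1 (\<lambda>x. H (x, a)) \<le> ereal L"
    and tether: "curve_length 0 1 (\<lambda>y. H (0, y)) \<le> ereal W"
    and closed: "\<And>y. y \<in> {0..1} \<Longrightarrow> H (1, y) = H (0, y)"
  shows "curve_length 0 1 (\<lambda>t. H (lasso a t)) \<le> ereal (L + 2 * W)"
proof -
  let ?u = "a/3" and ?v = "1 - a/3"
  have tether_a: "curve_length 0 a (\<lambda>y. H (0, y)) \<le> ereal W"
    using curve_length_mono_right[of 0 a 1] a tether by (meson order_trans)
  have "curve_length 0 ?u (\<lambda>t. H (lasso a t)) \<le> curve_length 0 a (\<lambda>y. H (0, y))"
    by (rule curve_length_reparam_mono_le[where \<phi> = "\<lambda>t. 3 * t"])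
      (use a in \<open>auto simp: lasso_climb intro: mono_onI\<close>)
  moreover have "curve_length ?u ?v (\<lambda>t. H (lasso a t)) \<le> curve_length 0 1 (\<lambda>x. H (x, a))"
    by (rule curve_length_reparam_mono_le[where \<phi> = "\<lambda>t. (t - a/3) / (1 - 2*a/3)"])
      (use a in \<open>auto simp: lasso_cross intro!: mono_onI divide_right_mono\<close>)
  moreover have "curve_length ?v 1 (\<lambda>t. H (lasso a t)) \<le> curve_length 0 a (\<lambda>y. H (0, y))"
    by (rule curve_length_reparam_antimono_le[where \<phi> = "\<lambda>t. 3 * (1 - t)"])
      (use a closed in \<open>auto simp: lasso_descend intro: monotone_onI\<close>)
  ultimately have "curve_length 0 ?u (\<lambda>t. H (lasso a t)) + curve_length ?u ?v (\<lambda>t. H (lasso a t))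
      + curve_length ?v 1 (\<lambda>t. H (lasso a t)) \<le> ereal W + ereal L + ereal W"
    using tether_a across by (intro add_mono) (auto intro: order_trans)
  also have "\<dots> = ereal (L + 2 * W)" by simp
  finally show ?thesis
    using curve_length_split3_le[of 0 ?u ?v 1] a by (auto intro: order_trans)
qed

lemma curve_length_tether:
  fixes \<beta> :: "real \<Rightarrow> 'a::metric_space"
  assumes b: "0 \<le> b" "b \<le> 1" and \<beta>: "curve_length 0 1 \<beta> \<le> ereal W"
  shows "curve_length 0 1 (\<lambda>t. \<beta> (tether b t)) \<le> ereal (2 * W)"
proof -
  have \<beta>_b: "curve_length 0 b \<beta> \<le> ereal W"
    using curve_length_mono_right[of 0 b 1] b \<beta> by (meson order_trans)
  have "curve_length 0 (1/3) (\<lambda>t. \<beta> (tether b t)) \<le> curve_length 0 b \<beta>"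
    by (rule curve_length_reparam_mono_le[where \<phi> = "\<lambda>t. b * (3 * t)"])
      (use b in \<open>auto simp: tether_climb intro!: mono_onI mult_left_mono\<close>)
  moreover have "curve_length (1/3) (2/3) (\<lambda>t. \<beta> (tether b t)) \<le> 0"
    by (rule curve_length_const[where c = "\<beta> b"]) (simp add: tether_wait)
  moreover have "curve_length (2/3) 1 (\<lambda>t. \<beta> (tether b t)) \<le> curve_length 0 b \<beta>"
    by (rule curve_length_reparam_antimono_le[where \<phi> = "\<lambda>t. b * (3 * (1 - t))"])
      (use b in \<open>auto simp: tether_descend intro!: monotone_onI mult_left_mono\<close>)
  ultimately have "curve_length 0 (1/3) (\<lambda>t. \<beta> (tether b t)) + curve_length (1/3) (2/3) (\<lambda>t. \<beta> (tether b t))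
      + curve_length (2/3) 1 (\<lambda>t. \<beta> (tether b t)) \<le> ereal W + 0 + ereal W"
    using \<beta>_b by (intro add_mono) (auto intro: order_trans)
  also have "\<dots> = ereal (2 * W)" by simp
  finally show ?thesis
    using curve_length_split3_le[of 0 "1/3" "2/3" 1] by (auto intro: order_trans)
qed

text \<open>First pull the lasso up the homotopy until its loop is the constant curve H(-,1), then
  reel in the tether.\<close>
definition lasso_contraction :: "(real \<times> real \<Rightarrow> 'a) \<Rightarrow> real \<times> real \<Rightarrow> 'a" where
  "lasso_contraction H z =
     (if snd z \<le> 1/2 then H (lasso (2 * snd z) (fst z)) else H (0, tether (2 - 2 * snd z) (fst z)))"

lemma continuous_on_lasso_contraction:
  assumes cont: "continuous_on ({0..1} \<times> {0..1}) H"
    and top: "\<And>x. x \<in> {0..1} \<Longrightarrow> H (x, 1) = c"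
    and closed: "\<And>y. y \<in> {0..1} \<Longrightarrow> H (1, y) = H (0, y)"
  shows "continuous_on ({0..1} \<times> {0..1}) (lasso_contraction H)"
  unfolding lasso_contraction_def
proof (rule continuous_on_cases_le)
  show "continuous_on {z \<in> {0..1} \<times> {0..1}. snd z \<le> 1/2} (\<lambda>z. H (lasso (2 * snd z) (fst z)))"
    by (rule continuous_on_compose2[OF cont]) (auto intro!: continuous_intros image_subsetI lasso_in_square)
  show "continuous_on {z \<in> {0..1} \<times> {0..1}. 1/2 \<le> snd z} (\<lambda>z. H (0, tether (2 - 2 * snd z) (fst z)))"
    by (rule continuous_on_compose2[OF cont]) (auto intro!: continuous_intros image_subsetI tether_in_unit)
  show "H (lasso (2 * snd z) (fst z)) = H (0, tether (2 - 2 * snd z) (fst z))"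
    if "z \<in> {0..1} \<times> {0..1}" "snd z = 1/2" for z
  proof -
    have "2 * snd z = 1" "2 - 2 * snd z = 1" using that(2) by simp_all
    then show ?thesis using that(1) lasso_one_eq_tether_one[OF top closed, of "fst z"] by auto
  qed
qed (intro continuous_intros)

lemma lasso_contraction_image:
  "lasso_contraction H ` ({0..1} \<times> {0..1}) \<subseteq> H ` ({0..1} \<times> {0..1})"
proof clarify
  fix t s :: real assume "t \<in> {0..1}" "s \<in> {0..1}"
  then show "lasso_contraction H (t, s) \<in> H ` ({0..1} \<times> {0..1})"
    using lasso_in_square[of "2 * s" t] tether_in_unit[of "2 - 2 * s" t]
    by (auto simp: lasso_contraction_def)
qed

lemma lasso_contraction_start: "t \<in> {0..1} \<Longrightarrow> lasso_contraction H (t, 0) = H (t, 0)"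
  by (simp add: lasso_contraction_def lasso_zero)

lemma lasso_contraction_finish: "lasso_contraction H (t, 1) = H (0, 0)"
  by (simp add: lasso_contraction_def tether_def)

lemma lasso_contraction_based:
  assumes "s \<in> {0..1}" "H (1, 0) = H (0, 0)"
  shows "lasso_contraction H (0, s) = H (0, 0)" "lasso_contraction H (1, s) = H (0, 0)"
  using assms lasso_climb[of "2 * s" 0] lasso_descend[of "2 * s" 1]
  by (auto simp: lasso_contraction_def tether_climb tether_descend)

lemma curve_length_lasso_contraction:
  fixes H :: "real \<times> real \<Rightarrow> 'a::metric_space"
  assumes s: "s \<in> {0..1}" and L: "0 \<le> L"
    and lengths: "\<And>\<tau>. \<tau> \<in> {0..1} \<Longrightarrow> curve_length 0 1 (\<lambda>x. H (x, \<tau>)) \<le> ereal L"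
    and tether: "curve_length 0 1 (\<lambda>y. H (0, y)) \<le> ereal W"
    and closed: "\<And>y. y \<in> {0..1} \<Longrightarrow> H (1, y) = H (0, y)"
  shows "curve_length 0 1 (\<lambda>t. lasso_contraction H (t, s)) \<le> ereal (L + 2 * W)"
proof (cases "s \<le> 1/2")
  case True
  then have "curve_length 0 1 (\<lambda>t. H (lasso (2 * s) t)) \<le> ereal (L + 2 * W)"
    using s by (intro curve_length_lasso lengths tether closed) auto
  then show ?thesis using True by (simp add: lasso_contraction_def)
next
  case False
  then have "curve_length 0 1 (\<lambda>t. H (0, tether (2 - 2 * s) t)) \<le> ereal (2 * W)"
    using s by (intro curve_length_tether[OF _ _ tether]) auto
  also have "\<dots> \<le> ereal (L + 2 * W)" using L by simp
  finally show ?thesis using False by (simp add: lasso_contraction_def)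
qed

theorem mainTheorem6:
  fixes M :: "'a::metric_space set"
    and \<gamma> :: "real \<Rightarrow> 'a"
    and H :: "real \<times> real \<Rightarrow> 'a"
    and L W :: real
  assumes M_compact: "compact M"
    and \<gamma>_cont: "continuous_on {0..1} \<gamma>"
    and \<gamma>_in: "\<gamma> ` {0..1} \<subseteq> M"
    and \<gamma>_closed: "\<gamma> 0 = \<gamma> 1"
    and \<gamma>_length: "curve_length 0 1 \<gamma> = ereal L"
    and H_cont: "continuous_on ({0..1} \<times> {0..1}) H"
    and H_in: "H ` ({0..1} \<times> {0..1}) \<subseteq> M"
    and H_start: "\<And>t. t \<in> {0..1} \<Longrightarrow> H (t, 0) = \<gamma> t"
    and H_closed: "\<And>\<tau>. \<tau> \<in> {0..1} \<Longrightarrow> H (0, \<tau>) = H (1, \<tau>)"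
    and H_end: "\<exists>p. \<forall>t\<in>{0..1}. H (t, 1) = p"
    and H_lengths: "\<And>\<tau>. \<tau> \<in> {0..1} \<Longrightarrow> curve_length 0 1 (\<lambda>t. H (t, \<tau>)) \<le> ereal L"
    and H_width: "homotopy_width H = ereal W"
  shows "\<exists>G :: real \<times> real \<Rightarrow> 'a.
           continuous_on ({0..1} \<times> {0..1}) G \<and>
           G ` ({0..1} \<times> {0..1}) \<subseteq> M \<and>
           (\<forall>t\<in>{0..1}. G (t, 0) = \<gamma> t) \<and>
           (\<forall>t\<in>{0..1}. G (t, 1) = \<gamma> 0) \<and>
           (\<forall>\<tau>\<in>{0..1}. G (0, \<tau>) = \<gamma> 0 \<and> G (1, \<tau>) = \<gamma> 0) \<and>
           (\<forall>\<tau>\<in>{0..1}. curve_length 0 1 (\<lambda>t. G (t, \<tau>)) \<le> ereal (L + 2 * W))"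
proof (intro exI conjI ballI)
  let ?G = "lasso_contraction H"
  obtain p where top: "\<And>x. x \<in> {0..1} \<Longrightarrow> H (x, 1) = p" using H_end by blast
  have closed: "\<And>y. y \<in> {0..1} \<Longrightarrow> H (1, y) = H (0, y)"
    by (rule H_closed[symmetric])
  have H00: "H (0, 0) = \<gamma> 0" by (simp add: H_start)
  have L: "0 \<le> L" using curve_length_nonneg[of 0 1 \<gamma>] \<gamma>_length by simp
  have tether: "curve_length 0 1 (\<lambda>y. H (0, y)) \<le> ereal W"
  proof -
    have "curve_length 0 1 (\<lambda>y. H (0, y)) \<le> homotopy_width H"
      unfolding homotopy_width_def by (rule SUP_upper) simp
    with H_width show ?thesis by simp
  qed
  show "continuous_on ({0..1} \<times> {0..1}) ?G"
    using continuous_on_lasso_contraction[OF H_cont top closed] .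
  show "?G ` ({0..1} \<times> {0..1}) \<subseteq> M" by (rule subset_trans[OF lasso_contraction_image H_in])
  show "?G (t, 0) = \<gamma> t" if "t \<in> {0..1}" for t
    using that H_start by (simp add: lasso_contraction_start)
  show "?G (t, 1) = \<gamma> 0" for t by (simp add: lasso_contraction_finish H00)
  fix \<tau> :: real assume \<tau>: "\<tau> \<in> {0..1}"
  show "?G (0, \<tau>) = \<gamma> 0" "?G (1, \<tau>) = \<gamma> 0"
    using lasso_contraction_based[OF \<tau> closed[of 0]] H00 by simp_all
  show "curve_length 0 1 (\<lambda>t. ?G (t, \<tau>)) \<le> ereal (L + 2 * W)"
    using curve_length_lasso_contraction[OF \<tau> L H_lengths tether closed] .
qed

end
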